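(* For every $\alpha\in[0,2]$, \[ \max_{\mathbf z\in\mathcal Z} F_\alpha(\mathbf z)\;=\;\max_{\mathbf x\in\mathcal X}F_\alpha(\mathbf x), \] i.e. the integrality gap $f^{\mathrm{SO}}(\mathbf z^* )/f^{\mathrm{RSO}}(\mathbf x^* )$ between the SSA problem with optimal allocation and its relaxation equals $1$, where $F_\alpha$ is defined below.
   Context: $\mathcal U$ (users) and $\mathcal B$ (stations) are finite nonempty sets, with positive rates $r_{ub}$. $\mathcal Z=\{\mathbf z\in\mathbb Z_+^{|\mathcal U|\times|\mathcal B|}:\sum_b z_{ub}=1\ \forall u\}$ and its relaxation $\mathcal X=\{\mathbf x\in\mathbb R_+^{|\mathcal U|\times|\mathcal B|}:\sum_b x_{ub}=1\ \forall u\}$. For $\mathbf w\in\mathcal X$ (in particular $\mathbf w\in\mathcal Z$) define $F_0(\mathbf w)=\sum_{b}\max_{u} r_{ub}w_{ub}$; $F_1(\mathbf w)=\sum_{u,b} w_{ub}\big(\log r_{ub}-\log(1+\sum_{v\ne u} w_{vb})\big)$; and for $\alpha>0,\alpha\ne1$: $F_\alpha(\mathbf w)=\frac{1}{1-\alpha}\sum_{u,b} r_{ub}^{1-\alpha}w_{ub}\big(1+\sum_{v\ne u}(r_{vb}/r_{ub})^{(1-\alpha)/\alpha}w_{vb}\big)^{\alpha-1}$. $f^{\mathrm{SO}}=\max_{\mathbf z\in\mathcal Z}F_\alpha(\mathbf z)$ is the single-station association utility maximization problem with optimal station resource allocation (sum over users of $\alpha$-fair utility $U_\alpha(R)=R^{1-\alpha}/(1-\alpha)$,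 $U_1=\log$, of downlink rates), and $f^{\mathrm{RSO}}=\max_{\mathbf x\in\mathcal X}F_\alpha(\mathbf x)$ is its relaxation; $\mathbf z^*,\mathbf x^*$ denote their optimizers. *)

theory Defs
  imports "HOL-Analysis.Analysis"
begin

definition assoc_frac :: "'u set \<Rightarrow> 'b set \<Rightarrow> ('u \<Rightarrow> 'b \<Rightarrow> real) set" where
  "assoc_frac U B = {w. (\<forall>u\<in>U. \<forall>b\<in>B. w u b \<ge> 0) \<and> (\<forall>u\<in>U. (\<Sum>b\<in>B. w u b) = 1)
      \<and> (\<forall>u b. u \<notin> U \<or> b \<notin> B \<longrightarrow> w u b = 0)}"

definition assoc_int :: "'u set \<Rightarrow> 'b set \<Rightarrow> ('u \<Rightarrow> 'b \<Rightarrow> real) set" where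
  "assoc_int U B = {w. w \<in> assoc_frac U B \<and> (\<forall>u\<in>U. \<forall>b\<in>B. w u b \<in> \<int>)}"

definition F0 :: "'u set \<Rightarrow> 'b set \<Rightarrow> ('u \<Rightarrow> 'b \<Rightarrow> real) \<Rightarrow> ('u \<Rightarrow> 'b \<Rightarrow> real) \<Rightarrow> real" where
  "F0 U B r w = (\<Sum>b\<in>B. MAX u\<in>U. r u b * w u b)"

definition F1 :: "'u set \<Rightarrow> 'b set \<Rightarrow> ('u \<Rightarrow> 'b \<Rightarrow> real) \<Rightarrow> ('u \<Rightarrow> 'b \<Rightarrow> real) \<Rightarrow> real" where
  "F1 U B r w = (\<Sum>u\<in>U. \<Sum>b\<in>B. w u b * (ln (r u b) - ln (1 + (\<Sum>v\<in>U - {u}. w v b))))"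

definition Fgen :: "real \<Rightarrow> 'u set \<Rightarrow> 'b set \<Rightarrow> ('u \<Rightarrow> 'b \<Rightarrow> real) \<Rightarrow> ('u \<Rightarrow> 'b \<Rightarrow> real) \<Rightarrow> real" where
  "Fgen \<alpha> U B r w = 1 / (1 - \<alpha>) * (\<Sum>u\<in>U. \<Sum>b\<in>B. r u b powr (1 - \<alpha>) * w u b *
      (1 + (\<Sum>v\<in>U - {u}. (r v b / r u b) powr ((1 - \<alpha>) / \<alpha>) * w v b)) powr (\<alpha> - 1))"

definition Falpha :: "real \<Rightarrow> 'u set \<Rightarrow> 'b set \<Rightarrow> ('u \<Rightarrow> 'b \<Rightarrow> real) \<Rightarrow> ('u \<Rightarrow> 'b \<Rightarrow> real) \<Rightarrow> real" where
  "Falpha \<alpha> U B r w = (if \<alpha> = 0 then F0 U B r w else if \<alpha> = 1 then F1 U B r w else Fgen \<alpha> U B r w)"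

end

theory Submission
  imports Defs
begin

text \<open>The objective splits into a sum over stations of functions of the
  station's column, and each such function lies below its chord between 0 and 1 in every
  coordinate: for \<alpha> = 0 because a maximum of linear functions is convex, otherwise because a
  user's own term is linear in its weight while it enters every other user's term through the
  convex function t \<mapsto> t powr (\<alpha>-1) / (1-\<alpha>) (resp. -ln t) of an affine expression.
  Fixing all rows but one, the objective is therefore bounded by an affine function of that row,
  which over the simplex is maximised at a vertex; rounding the rows one at a time yields an
  integral association that is at least as good as any fractional one.\<close>

definition unit_coordinate_convex :: "'u set \<Rightarrow> (('u \<Rightarrow> real) \<Rightarrow> real) \<Rightarrow> bool" where
  "unit_coordinate_convex U H \<longleftrightarrow>
     (\<forall>c u t. (\<forall>v\<in>U. 0 \<le> c v) \<longrightarrow> u \<in> U \<longrightarrow> 0 \<le> t \<longrightarrow> t \<le> 1 \<longrightarrow>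
        H (c(u := t)) \<le> (1 - t) * H (c(u := 0)) + t * H (c(u := 1)))"

lemma unit_coordinate_convexI:
  assumes "\<And>c u t. \<forall>v\<in>U. 0 \<le> c v \<Longrightarrow> u \<in> U \<Longrightarrow> 0 \<le> t \<Longrightarrow> t \<le> 1 \<Longrightarrow>
             H (c(u := t)) \<le> (1 - t) * H (c(u := 0)) + t * H (c(u := 1))"
  shows "unit_coordinate_convex U H"
  using assms unfolding unit_coordinate_convex_def by blast

lemma unit_coordinate_convexD:
  assumes "unit_coordinate_convex U H" "\<And>v. v \<in> U \<Longrightarrow> 0 \<le> c v" "u \<in> U" "0 \<le> t" "t \<le> 1"
  shows "H (c(u := t)) \<le> (1 - t) * H (c(u := 0)) + t * H (c(u := 1))"
  using assms unfolding unit_coordinate_convex_def by blast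

lemma unit_coordinate_convex_Max_weighted:
  assumes fin: "finite U" and ne: "U \<noteq> {}" and \<rho>: "\<And>v. v \<in> U \<Longrightarrow> 0 \<le> \<rho> v"
  shows "unit_coordinate_convex U (\<lambda>c. MAX v\<in>U. \<rho> v * c v)"
proof (rule unit_coordinate_convexI)
  fix c :: "'a \<Rightarrow> real" and u and t :: real
  assume u: "u \<in> U" and t0: "0 \<le> t" and t1: "t \<le> 1"
  let ?M = "\<lambda>c. MAX v\<in>U. \<rho> v * c v"
  have ge: "\<rho> v * c' v \<le> ?M c'" if "v \<in> U" for v c'
    using fin that by (intro Max_ge) auto
  have M0: "0 \<le> ?M (c(u := 0))"
    using ge[OF u, of "c(u := 0)"] by simp
  show "?M (c(u := t)) \<le> (1 - t) * ?M (c(u := 0)) + t * ?M (c(u := 1))"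
  proof (rule Max.boundedI)
    show "finite ((\<lambda>v. \<rho> v * (c(u := t)) v) ` U)" "(\<lambda>v. \<rho> v * (c(u := t)) v) ` U \<noteq> {}"
      using fin ne by auto
    fix y assume "y \<in> (\<lambda>v. \<rho> v * (c(u := t)) v) ` U"
    then obtain v where v: "v \<in> U" and y: "y = \<rho> v * (c(u := t)) v" by auto
    show "y \<le> (1 - t) * ?M (c(u := 0)) + t * ?M (c(u := 1))"
    proof (cases "v = u")
      case True
      have "t * \<rho> u \<le> t * ?M (c(u := 1))"
        using ge[OF u, of "c(u := 1)"] t0 by (intro mult_left_mono) auto
      moreover have "0 \<le> (1 - t) * ?M (c(u := 0))" using M0 t1 by simp
      moreover have "y = t * \<rho> u" using y True by simp
      ultimately show ?thesis by linarith
    next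
      case False
      have "(1 - t) * (\<rho> v * c v) \<le> (1 - t) * ?M (c(u := 0))"
        using ge[OF v, of "c(u := 0)"] t1 False by (intro mult_left_mono) auto
      moreover have "t * (\<rho> v * c v) \<le> t * ?M (c(u := 1))"
        using ge[OF v, of "c(u := 1)"] t0 False by (intro mult_left_mono) auto
      ultimately show ?thesis using y False by (simp add: algebra_simps)
    qed
  qed
qed

definition load_utility ::
    "'u set \<Rightarrow> ('u \<Rightarrow> real) \<Rightarrow> ('u \<Rightarrow> real) \<Rightarrow> ('u \<Rightarrow> 'u \<Rightarrow> real) \<Rightarrow> (real \<Rightarrow> real) \<Rightarrow> ('u \<Rightarrow> real) \<Rightarrow> real"
  where "load_utility U L a k \<phi> c =
    (\<Sum>v\<in>U. c v * L v + a v * c v * \<phi> (1 + (\<Sum>v'\<in>U - {v}. k v v' * c v')))"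

lemma load_term_unit_coordinate_convex:
  fixes c :: "'u \<Rightarrow> real" and L :: real
  assumes fin: "finite U" and a: "0 \<le> a" and k: "\<And>v'. v' \<in> U \<Longrightarrow> 0 \<le> k v'"
    and \<phi>: "convex_on {0<..} \<phi>" and c: "\<And>v'. v' \<in> U \<Longrightarrow> 0 \<le> c v'"
    and v: "v \<in> U" and u: "u \<in> U" "u \<noteq> v" and t0: "0 \<le> t" and t1: "t \<le> 1"
  defines "T \<equiv> \<lambda>c. c v * L + a * c v * \<phi> (1 + (\<Sum>v'\<in>U - {v}. k v' * c v'))"
  shows "T (c(u := t)) \<le> (1 - t) * T (c(u := 0)) + t * T (c(u := 1))"
proof -
  define S where "S = (\<Sum>v'\<in>U - {v} - {u}. k v' * c v')"
  have S0: "0 \<le> S" unfolding S_def using c k by (intro sum_nonneg) auto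
  have load: "(\<Sum>v'\<in>U - {v}. k v' * (c(u := s)) v') = S + k u * s" for s
  proof -
    have "(\<Sum>v'\<in>U - {v}. k v' * (c(u := s)) v')
        = k u * s + (\<Sum>v'\<in>U - {v} - {u}. k v' * (c(u := s)) v')"
      using fin u by (subst sum.remove[of _ u]) auto
    also have "(\<Sum>v'\<in>U - {v} - {u}. k v' * (c(u := s)) v') = S"
      unfolding S_def by (rule sum.cong) auto
    finally show ?thesis by simp
  qed
  have "\<phi> ((1 - t) *\<^sub>R (1 + S) + t *\<^sub>R (1 + S + k u)) \<le> (1 - t) * \<phi> (1 + S) + t * \<phi> (1 + S + k u)"
    using S0 k[OF u(1)] by (intro convex_onD[OF \<phi> t0 t1]) auto
  then have "\<phi> (1 + (S + k u * t)) \<le> (1 - t) * \<phi> (1 + S) + t * \<phi> (1 + S + k u)"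
    by (simp add: algebra_simps)
  from mult_left_mono[OF this] have
    "a * c v * \<phi> (1 + (S + k u * t)) \<le> a * c v * ((1 - t) * \<phi> (1 + S) + t * \<phi> (1 + S + k u))"
    using a c[OF v] by simp
  then show ?thesis unfolding T_def load using u(2) by (simp add: algebra_simps)
qed

lemma unit_coordinate_convex_load_utility:
  assumes fin: "finite U" and a: "\<And>v. v \<in> U \<Longrightarrow> 0 \<le> a v"
    and k: "\<And>v v'. v \<in> U \<Longrightarrow> v' \<in> U \<Longrightarrow> 0 \<le> k v v'" and \<phi>: "convex_on {0<..} \<phi>"
  shows "unit_coordinate_convex U (load_utility U L a k \<phi>)"
proof (rule unit_coordinate_convexI)
  fix c :: "'a \<Rightarrow> real" and u and t :: real
  assume c: "\<forall>v\<in>U. 0 \<le> c v" and u: "u \<in> U" and t0: "0 \<le> t" and t1: "t \<le> 1"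
  define T where "T = (\<lambda>v (c :: 'a \<Rightarrow> real). c v * L v + a v * c v * \<phi> (1 + (\<Sum>v'\<in>U - {v}. k v v' * c v')))"
  have term_le: "T v (c(u := t)) \<le> (1 - t) * T v (c(u := 0)) + t * T v (c(u := 1))"
    if v: "v \<in> U" for v
  proof (cases "v = u")
    case True
    have "(\<Sum>v'\<in>U - {u}. k u v' * (c(u := s)) v') = (\<Sum>v'\<in>U - {u}. k u v' * c v')" for s
      by (rule sum.cong) auto
    then show ?thesis unfolding T_def True by (simp add: algebra_simps)
  next
    case False
    have kv: "\<And>v'. v' \<in> U \<Longrightarrow> 0 \<le> k v v'" and cU: "\<And>v'. v' \<in> U \<Longrightarrow> 0 \<le> c v'"
      using k v c by auto
    from load_term_unit_coordinate_convex[OF fin a[OF v] kv \<phi> cU v u not_sym[OF False] t0 t1, where L = "L v"]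
    show ?thesis unfolding T_def .

  qed
  have "load_utility U L a k \<phi> c' = (\<Sum>v\<in>U. T v c')" for c'
    by (simp add: load_utility_def T_def)
  moreover have "(\<Sum>v\<in>U. T v (c(u := t))) \<le> (\<Sum>v\<in>U. (1 - t) * T v (c(u := 0)) + t * T v (c(u := 1)))"
    by (rule sum_mono) (rule term_le)
  ultimately show "load_utility U L a k \<phi> (c(u := t))
      \<le> (1 - t) * load_utility U L a k \<phi> (c(u := 0)) + t * load_utility U L a k \<phi> (c(u := 1))"
    by (simp add: sum.distrib sum_distrib_left)
qed

lemma convex_on_powr_div_one_minus:
  assumes "\<alpha> \<le> 2" "\<alpha> \<noteq> 1"
  shows "convex_on {0<..} (\<lambda>x::real. x powr (\<alpha> - 1) / (1 - \<alpha>))"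
proof (rule f''_ge0_imp_convex[where f' = "\<lambda>x. - (x powr (\<alpha> - 2))"
                                  and f'' = "\<lambda>x. (2 - \<alpha>) * x powr (\<alpha> - 3)"])
  fix x :: real assume "x \<in> {0<..}"
  then have x: "0 < x" by simp
  have "(\<alpha> - 1) * x powr (\<alpha> - 1 - 1) / (1 - \<alpha>) = - (x powr (\<alpha> - 2))"
    using assms(2) by (simp add: field_simps)
  with DERIV_cdivide[OF has_real_derivative_powr[OF x, of "\<alpha> - 1"], of "1 - \<alpha>"]
  show "((\<lambda>x. x powr (\<alpha> - 1) / (1 - \<alpha>)) has_real_derivative - (x powr (\<alpha> - 2))) (at x)"
    by simp
  show "((\<lambda>x. - (x powr (\<alpha> - 2))) has_real_derivative (2 - \<alpha>) * x powr (\<alpha> - 3)) (at x)"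
    using DERIV_minus[OF has_real_derivative_powr[OF x, of "\<alpha> - 2"]]
    by (simp add: algebra_simps)
  show "0 \<le> (2 - \<alpha>) * x powr (\<alpha> - 3)" using assms by simp
qed simp

lemma Falpha_station_decomposition:
  fixes U :: "'u set" and B :: "'b set" and r :: "'u \<Rightarrow> 'b \<Rightarrow> real"
  assumes finU: "finite U" and neU: "U \<noteq> {}"
    and r: "\<And>u b. u \<in> U \<Longrightarrow> b \<in> B \<Longrightarrow> 0 < r u b" and \<alpha>: "\<alpha> \<le> 2"
  obtains H where "\<And>w. Falpha \<alpha> U B r w = (\<Sum>b\<in>B. H b (\<lambda>v. w v b))"
    and "\<And>b. b \<in> B \<Longrightarrow> unit_coordinate_convex U (H b)"
proof (cases "\<alpha> = 0")
  case True
  show thesis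
  proof (rule that[of "\<lambda>b c. MAX v\<in>U. r v b * c v"])
    show "Falpha \<alpha> U B r w = (\<Sum>b\<in>B. MAX v\<in>U. r v b * w v b)" for w
      using True by (simp add: Falpha_def F0_def)
    show "unit_coordinate_convex U (\<lambda>c. MAX v\<in>U. r v b * c v)" if "b \<in> B" for b
      using r that by (intro unit_coordinate_convex_Max_weighted finU neU less_imp_le)
  qed
next
  case False
  note \<alpha>_ne_0 = False
  show thesis
  proof (cases "\<alpha> = 1")
    case True
    have "convex_on {0<..} (\<lambda>x::real. - ln x)"
      using ln_concave unfolding concave_on_def .
    with r show thesis
      by (intro that[of "\<lambda>b. load_utility U (\<lambda>v. ln (r v b)) (\<lambda>_. 1) (\<lambda>_ _. 1) (\<lambda>x. - ln x)"]
          unit_coordinate_convex_load_utility finU,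
        use True in \<open>auto simp: Falpha_def F1_def load_utility_def algebra_simps intro: sum.swap\<close>)
  next
    case False
    show thesis
    proof (rule that[of "\<lambda>b. load_utility U (\<lambda>_. 0) (\<lambda>v. r v b powr (1 - \<alpha>))
                              (\<lambda>v v'. (r v' b / r v b) powr ((1 - \<alpha>) / \<alpha>)) (\<lambda>x. x powr (\<alpha> - 1) / (1 - \<alpha>))"])
      show "unit_coordinate_convex U (load_utility U (\<lambda>_. 0) (\<lambda>v. r v b powr (1 - \<alpha>))
              (\<lambda>v v'. (r v' b / r v b) powr ((1 - \<alpha>) / \<alpha>)) (\<lambda>x. x powr (\<alpha> - 1) / (1 - \<alpha>)))" for b
        using False \<alpha> by (intro unit_coordinate_convex_load_utility finU convex_on_powr_div_one_minus) auto
      show "Falpha \<alpha> U B r w = (\<Sum>b\<in>B. load_utility U (\<lambda>_. 0) (\<lambda>v. r v b powr (1 - \<alpha>))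
              (\<lambda>v v'. (r v' b / r v b) powr ((1 - \<alpha>) / \<alpha>)) (\<lambda>x. x powr (\<alpha> - 1) / (1 - \<alpha>)) (\<lambda>v. w v b))" for w
        using \<alpha>_ne_0 False unfolding Falpha_def Fgen_def load_utility_def
        by (simp add: sum_distrib_left, subst sum.swap, intro sum.cong refl)
    qed
  qed
qed

lemma assoc_frac_le_1:
  assumes "finite B" "w \<in> assoc_frac U B" "u \<in> U" "b \<in> B"
  shows "w u b \<le> 1"
proof -
  have "w u b \<le> (\<Sum>b\<in>B. w u b)"
    using assms unfolding assoc_frac_def by (intro member_le_sum) auto
  then show ?thesis using assms(2,3) unfolding assoc_frac_def by simp
qed

lemma assoc_frac_update_row_vertex:
  assumes "finite B" "x \<in> assoc_frac U B" "u \<in> U" "b0 \<in> B"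
  shows "x(u := (\<lambda>b. if b = b0 then 1 else 0)) \<in> assoc_frac U B"
  unfolding assoc_frac_def
proof (intro CollectI conjI ballI allI impI)
  let ?x' = "x(u := (\<lambda>b. if b = b0 then 1 else 0))"
  show "0 \<le> ?x' v b" if "v \<in> U" "b \<in> B" for v b
    using assms(2) that unfolding assoc_frac_def by simp
  show "(\<Sum>b\<in>B. ?x' v b) = 1" if "v \<in> U" for v
    using assms that unfolding assoc_frac_def by simp
  show "?x' v b = 0" if "v \<notin> U \<or> b \<notin> B" for v b
    using assms that unfolding assoc_frac_def by auto
qed

lemma assoc_frac_round_row:
  fixes F :: "('u \<Rightarrow> 'b \<Rightarrow> real) \<Rightarrow> real" and H :: "'b \<Rightarrow> ('u \<Rightarrow> real) \<Rightarrow> real"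
  assumes finB: "finite B" and neB: "B \<noteq> {}"
    and F: "\<And>w. F w = (\<Sum>b\<in>B. H b (\<lambda>v. w v b))"
    and H: "\<And>b. b \<in> B \<Longrightarrow> unit_coordinate_convex U (H b)"
    and x: "x \<in> assoc_frac U B" and u: "u \<in> U"
  obtains x' where "x' \<in> assoc_frac U B" "F x \<le> F x'" "\<And>b. x' u b \<in> \<int>" "\<And>v. v \<noteq> u \<Longrightarrow> x' v = x v"
proof -
  have x0: "\<And>v b. v \<in> U \<Longrightarrow> b \<in> B \<Longrightarrow> 0 \<le> x v b"
    and x1: "\<And>v. v \<in> U \<Longrightarrow> (\<Sum>b\<in>B. x v b) = 1"
    using x unfolding assoc_frac_def by auto
  define g where "g = (\<lambda>b t. H b ((\<lambda>v. x v b)(u := t)))"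
  define d where "d = (\<lambda>b. g b 1 - g b 0)"
  have "Max (d ` B) \<in> d ` B" using finB neB by (intro Max_in) auto
  then obtain b0 where b0: "b0 \<in> B" "d b0 = Max (d ` B)" by auto
  have d_le: "d b \<le> d b0" if "b \<in> B" for b
    using b0 finB that by simp
  define x' where "x' = x(u := (\<lambda>b. if b = b0 then 1 else 0))"
  have "x' \<in> assoc_frac U B"
    unfolding x'_def using finB x u b0(1) by (rule assoc_frac_update_row_vertex)
  have Fx: "F x = (\<Sum>b\<in>B. g b (x u b))"
    unfolding F g_def by (simp add: fun_upd_idem)
  have Fx': "F x' = (\<Sum>b\<in>B. g b 0) + d b0"
  proof -
    have "(\<lambda>v. x' v b) = (\<lambda>v. x v b)(u := if b = b0 then 1 else 0)" for b
      by (simp add: x'_def fun_eq_iff)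
    then have "F x' = (\<Sum>b\<in>B. g b 0 + (if b = b0 then d b else 0))"
      unfolding F g_def d_def by (intro sum.cong) auto
    then show ?thesis using finB b0 by (simp add: sum.distrib)
  qed
  have "F x \<le> (\<Sum>b\<in>B. (1 - x u b) * g b 0 + x u b * g b 1)"
    unfolding Fx g_def using x0 u assoc_frac_le_1[OF finB x u]
    by (intro sum_mono unit_coordinate_convexD[OF H]) auto
  also have "\<dots> = (\<Sum>b\<in>B. g b 0) + (\<Sum>b\<in>B. x u b * d b)"
    unfolding d_def sum.distrib[symmetric] by (intro sum.cong) (auto simp: algebra_simps)
  also have "(\<Sum>b\<in>B. x u b * d b) \<le> (\<Sum>b\<in>B. x u b * d b0)"
    using x0[OF u] d_le by (intro sum_mono mult_left_mono) auto
  also have "(\<Sum>b\<in>B. x u b * d b0) = d b0"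
    using x1[OF u] by (simp add: sum_distrib_right[symmetric])
  finally have "F x \<le> F x'" using Fx' by simp
  then show thesis
    using that \<open>x' \<in> assoc_frac U B\<close> by (simp add: x'_def)
qed

lemma assoc_frac_round:
  fixes F :: "('u \<Rightarrow> 'b \<Rightarrow> real) \<Rightarrow> real" and H :: "'b \<Rightarrow> ('u \<Rightarrow> real) \<Rightarrow> real"
  assumes finU: "finite U" and finB: "finite B" and neB: "B \<noteq> {}"
    and F: "\<And>w. F w = (\<Sum>b\<in>B. H b (\<lambda>v. w v b))"
    and H: "\<And>b. b \<in> B \<Longrightarrow> unit_coordinate_convex U (H b)"
    and x: "x \<in> assoc_frac U B"
  obtains z where "z \<in> assoc_int U B" "F x \<le> F z"
proof -
  have "\<exists>z\<in>assoc_int U B. F x \<le> F z"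
    if "finite V" "x \<in> assoc_frac U B" "\<forall>u\<in>U - V. \<forall>b\<in>B. x u b \<in> \<int>" for V x
    using that
  proof (induction V arbitrary: x rule: finite_induct)
    case empty
    then show ?case unfolding assoc_int_def by auto
  next
    case (insert u V)
    show ?case
    proof (cases "u \<in> U")
      case False
      with insert.prems show ?thesis by (intro insert.IH) auto
    next
      case True
      obtain x' where x': "x' \<in> assoc_frac U B" "F x \<le> F x'"
        and row_u: "\<And>b. x' u b \<in> \<int>" and rows: "\<And>v. v \<noteq> u \<Longrightarrow> x' v = x v"
        using assoc_frac_round_row[OF finB neB F H insert.prems(1) True] by blast
      have "\<forall>u'\<in>U - V. \<forall>b\<in>B. x' u' b \<in> \<int>"
        using insert.prems(2) row_u rows by (metis DiffD1 DiffD2 DiffI insertE)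
      then obtain z where "z \<in> assoc_int U B" "F x' \<le> F z"
        using insert.IH[OF x'(1)] by blast
      with x'(2) show ?thesis by (meson order_trans)
    qed
  qed
  from this[OF finU x] that show thesis by auto
qed

lemma finite_assoc_int:
  assumes "finite U" "finite B"
  shows "finite (assoc_int U B)"
proof -
  let ?embed = "\<lambda>f u b. if u \<in> U \<and> b \<in> B then f (u, b) else (0::real)"
  have "assoc_int U B \<subseteq> ?embed ` PiE (U \<times> B) (\<lambda>_. {0, 1})"
  proof
    fix w assume w: "w \<in> assoc_int U B"
    then have w_frac: "w \<in> assoc_frac U B" unfolding assoc_int_def by auto
    have w01: "w u b \<in> {0, 1}" if "u \<in> U" "b \<in> B" for u b
    proof -
      have "w u b \<in> \<int>" using w that unfolding assoc_int_def by auto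
      then obtain n where n: "w u b = of_int n" by (rule Ints_cases)
      have "0 \<le> w u b" "w u b \<le> 1"
        using w_frac that assoc_frac_le_1[OF assms(2) w_frac] unfolding assoc_frac_def by auto
      then show ?thesis using n by auto
    qed
    show "w \<in> ?embed ` PiE (U \<times> B) (\<lambda>_. {0, 1})"
    proof (rule image_eqI)
      show "w = ?embed (restrict (\<lambda>(u, b). w u b) (U \<times> B))"
        using w_frac unfolding assoc_frac_def by (auto simp: fun_eq_iff)
      show "restrict (\<lambda>(u, b). w u b) (U \<times> B) \<in> PiE (U \<times> B) (\<lambda>_. {0, 1})"
        using w01 by auto
    qed
  qed
  moreover have "finite (PiE (U \<times> B) (\<lambda>_. {0::real, 1}))"
    using assms by (intro finite_PiE) auto
  ultimately show ?thesis by (meson finite_imageI finite_subset)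
qed

lemma assoc_int_single_station:
  assumes "finite B" "b0 \<in> B"
  shows "(\<lambda>u b. if u \<in> U \<and> b = b0 then 1 else 0) \<in> assoc_int U B"
  unfolding assoc_int_def assoc_frac_def
proof (intro CollectI conjI ballI allI impI)
  show "(\<Sum>b\<in>B. if u \<in> U \<and> b = b0 then 1 else 0) = (1::real)" if "u \<in> U" for u
    using that assms by simp
qed (use assms in auto)

lemma Max_image_eq_Sup_image_if_dominating:
  fixes f :: "'a \<Rightarrow> 'b::conditionally_complete_linorder"
  assumes "finite A" "A \<noteq> {}" "A \<subseteq> X" and dom: "\<And>x. x \<in> X \<Longrightarrow> \<exists>z\<in>A. f x \<le> f z"
  shows "(MAX z\<in>A. f z) = (SUP x\<in>X. f x) \<and> (\<exists>x\<in>X. \<forall>y\<in>X. f y \<le> f x)"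
proof -
  have "(MAX z\<in>A. f z) \<in> f ` A" using assms(1,2) by simp
  then obtain z0 where z0: "z0 \<in> A" "f z0 = (MAX z\<in>A. f z)" by auto
  have bound: "f y \<le> f z0" if "y \<in> X" for y
    using dom[OF that] z0 assms(1) by (auto intro: order_trans)
  have "(SUP x\<in>X. f x) = f z0"
    using z0(1) assms(3) bound by (intro cSup_eq_maximum) auto
  moreover have "z0 \<in> X" using z0(1) assms(3) by blast
  ultimately show ?thesis using z0(2) bound by metis
qed

theorem theorem1:
  fixes U :: "'u set" and B :: "'b set" and r :: "'u \<Rightarrow> 'b \<Rightarrow> real" and \<alpha> :: real
  assumes "finite U" "U \<noteq> {}" "finite B" "B \<noteq> {}"
    and "\<And>u b. u \<in> U \<Longrightarrow> b \<in> B \<Longrightarrow> r u b > 0"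
    and "0 \<le> \<alpha>" "\<alpha> \<le> 2"
  shows "(MAX z \<in> assoc_int U B. Falpha \<alpha> U B r z) = (SUP x \<in> assoc_frac U B. Falpha \<alpha> U B r x)
     \<and> (\<exists>x \<in> assoc_frac U B. \<forall>y \<in> assoc_frac U B. Falpha \<alpha> U B r y \<le> Falpha \<alpha> U B r x)"
proof (rule Max_image_eq_Sup_image_if_dominating)
  show "finite (assoc_int U B)" using assms(1,3) by (rule finite_assoc_int)
  obtain b0 where "b0 \<in> B" using assms(4) by blast
  from assoc_int_single_station[OF assms(3) this]
  show "assoc_int U B \<noteq> {}" by blast
  show "assoc_int U B \<subseteq> assoc_frac U B" unfolding assoc_int_def by auto
  obtain H where F: "\<And>w. Falpha \<alpha> U B r w = (\<Sum>b\<in>B. H b (\<lambda>v. w v b))"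
    and H: "\<And>b. b \<in> B \<Longrightarrow> unit_coordinate_convex U (H b)"
    using Falpha_station_decomposition[where r = r and B = B, OF assms(1,2,5,7)] by blast
  fix x assume "x \<in> assoc_frac U B"
  then obtain z where "z \<in> assoc_int U B" "Falpha \<alpha> U B r x \<le> Falpha \<alpha> U B r z"
    using assoc_frac_round[where F = "Falpha \<alpha> U B r", OF assms(1,3,4) F H] by blast
  then show "\<exists>z\<in>assoc_int U B. Falpha \<alpha> U B r x \<le> Falpha \<alpha> U B r z" by blast
qed

end
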